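(* Let $G$ be a path-pairable graph on $n$ vertices with diameter $d \geq 20$, and let $x,y$ be vertices with $d(x,y)=d$. For $i \geq 0$ let $S_i=\{z\in V(G): d(x,z)=i\}$, $s_i=|S_i|$, and $u_i=\sum_{j=0}^{i}s_j$. Then for every integer $k\geq 0$ with $u_{2k+1}\leq \frac{n}{2}$ we have $s_{2k}+s_{2k+1}\geq k$.
   Context: A graph $G$ on $n=2m$ vertices is path-pairable if for every partition of its vertex set into $m$ pairs $\{x_1,y_1\},\dots,\{x_m,y_m\}$ there exist pairwise edge-disjoint paths $P_1,\dots,P_m$ such that $P_i$ joins $x_i$ to $y_i$ for each $i$. $d(u,v)$ denotes the graph distance between vertices $u$ and $v$. *)

theory Defs
  imports Main
begin

definition simple_graph :: "'a set \<Rightarrow> ('a \<Rightarrow> 'a \<Rightarrow> bool) \<Rightarrow> bool" where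
  "simple_graph V E \<longleftrightarrow> finite V \<and> (\<forall>u v. E u v \<longrightarrow> u \<in> V \<and> v \<in> V \<and> u \<noteq> v \<and> E v u)"

definition walk :: "'a set \<Rightarrow> ('a \<Rightarrow> 'a \<Rightarrow> bool) \<Rightarrow> 'a list \<Rightarrow> bool" where
  "walk V E xs \<longleftrightarrow> xs \<noteq> [] \<and> set xs \<subseteq> V \<and> (\<forall>i. Suc i < length xs \<longrightarrow> E (xs ! i) (xs ! Suc i))"

definition gpath :: "'a set \<Rightarrow> ('a \<Rightarrow> 'a \<Rightarrow> bool) \<Rightarrow> 'a list \<Rightarrow> bool" where
  "gpath V E xs \<longleftrightarrow> walk V E xs \<and> distinct xs"

definition path_edges :: "'a list \<Rightarrow> 'a set set" where
  "path_edges xs = {{xs ! i, xs ! Suc i} | i. Suc i < length xs}"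

definition connected_graph :: "'a set \<Rightarrow> ('a \<Rightarrow> 'a \<Rightarrow> bool) \<Rightarrow> bool" where
  "connected_graph V E \<longleftrightarrow> (\<forall>u\<in>V. \<forall>v\<in>V. \<exists>xs. walk V E xs \<and> hd xs = u \<and> last xs = v)"

text \<open>Graph distance (number of edges of a shortest walk); meaningful for connected graphs.\<close>
definition gdist :: "'a set \<Rightarrow> ('a \<Rightarrow> 'a \<Rightarrow> bool) \<Rightarrow> 'a \<Rightarrow> 'a \<Rightarrow> nat" where
  "gdist V E u v = (LEAST k. \<exists>xs. walk V E xs \<and> hd xs = u \<and> last xs = v \<and> length xs = Suc k)"

definition has_diameter :: "'a set \<Rightarrow> ('a \<Rightarrow> 'a \<Rightarrow> bool) \<Rightarrow> nat \<Rightarrow> bool" where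
  "has_diameter V E d \<longleftrightarrow> V \<noteq> {} \<and> connected_graph V E \<and>
     d = Max {gdist V E u v | u v. u \<in> V \<and> v \<in> V}"

definition pairing :: "'a set \<Rightarrow> 'a set set \<Rightarrow> bool" where
  "pairing V M \<longleftrightarrow> (\<forall>p\<in>M. card p = 2) \<and> \<Union>M = V \<and>
     (\<forall>p\<in>M. \<forall>q\<in>M. p \<noteq> q \<longrightarrow> p \<inter> q = {})"

definition path_pairable :: "'a set \<Rightarrow> ('a \<Rightarrow> 'a \<Rightarrow> bool) \<Rightarrow> bool" where
  "path_pairable V E \<longleftrightarrow> even (card V) \<and>
     (\<forall>M. pairing V M \<longrightarrow>
        (\<exists>P. (\<forall>p\<in>M. gpath V E (P p) \<and> {hd (P p), last (P p)} = p) \<and>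
             (\<forall>p\<in>M. \<forall>q\<in>M. p \<noteq> q \<longrightarrow> path_edges (P p) \<inter> path_edges (P q) = {})))"

end

theory Submission
  imports Defs
begin

text \<open>
  Let B be the ball of radius m around x, and suppose the ball of radius m + 1 contains at
  most half of the vertices. Then every vertex of B can be matched with its own vertex at
  distance greater than m + 1, and the matching extends to a pairing of all vertices. Each of
  the |B| edge-disjoint paths joining a matched pair must use an edge between the spheres
  S_m and S_(m+1), hence u_m <= s_m s_(m+1). By induction on k, u_(2k-1) >= 0 + 1 + ... + (k-1);
  so if s_2k + s_(2k+1) < k, then s_2k s_(2k+1) <= (k-1)^2/4 is too small to bound u_2k.
\<close>

lemma walk_snoc:
  assumes "walk V E xs" and "E (last xs) v" and "v \<in> V"
  shows "walk V E (xs @ [v])"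
  unfolding walk_def
proof (intro conjI allI impI)
  show "xs @ [v] \<noteq> []" by simp
  show "set (xs @ [v]) \<subseteq> V" using assms unfolding walk_def by auto
  fix i assume i: "Suc i < length (xs @ [v])"
  show "E ((xs @ [v]) ! i) ((xs @ [v]) ! Suc i)"
  proof (cases "Suc i < length xs")
    case True
    then show ?thesis using assms(1) unfolding walk_def by (simp add: nth_append)
  next
    case False
    with i assms(1) have "i = length xs - 1" and "xs \<noteq> []" unfolding walk_def by auto
    with False assms(2) show ?thesis by (simp add: nth_append last_conv_nth)
  qed
qed

lemma gdist_shortest_walk:
  assumes "connected_graph V E" and "u \<in> V" and "v \<in> V"
  shows "\<exists>xs. walk V E xs \<and> hd xs = u \<and> last xs = v \<and> length xs = Suc (gdist V E u v)"
proof -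
  obtain xs where xs: "walk V E xs" "hd xs = u" "last xs = v"
    using assms unfolding connected_graph_def by blast
  then have "length xs = Suc (length xs - 1)" unfolding walk_def by simp
  with xs have "\<exists>k xs. walk V E xs \<and> hd xs = u \<and> last xs = v \<and> length xs = Suc k" by blast
  then show ?thesis unfolding gdist_def by (rule LeastI_ex)
qed

lemma gdist_self:
  assumes "x \<in> V"
  shows "gdist V E x x = 0"
proof -
  have "walk V E [x]" using assms unfolding walk_def by simp
  then have "\<exists>xs. walk V E xs \<and> hd xs = x \<and> last xs = x \<and> length xs = Suc 0" by force
  then show ?thesis unfolding gdist_def by (rule Least_eq_0)
qed

lemma gdist_adjacent_le:
  assumes "simple_graph V E" and "connected_graph V E" and "x \<in> V" and "E u v"
  shows "gdist V E x v \<le> Suc (gdist V E x u)"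
proof -
  have "u \<in> V" "v \<in> V" using assms(1,4) unfolding simple_graph_def by auto
  then obtain xs where xs: "walk V E xs" "hd xs = x" "last xs = u"
      "length xs = Suc (gdist V E x u)"
    using gdist_shortest_walk[OF assms(2,3)] by blast
  then have "xs \<noteq> []" unfolding walk_def by simp
  with xs \<open>v \<in> V\<close> assms(4) have "walk V E (xs @ [v]) \<and> hd (xs @ [v]) = x \<and>
      last (xs @ [v]) = v \<and> length (xs @ [v]) = Suc (Suc (gdist V E x u))"
    by (simp add: walk_snoc)
  then show ?thesis unfolding gdist_def[of V E x v] by (intro Least_le) blast
qed

lemma list_crosses_threshold:
  fixes g :: "'a \<Rightarrow> nat"
  assumes "xs \<noteq> []" and "(g (hd xs) \<le> m) \<noteq> (g (last xs) \<le> m)"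
    and "\<forall>i. Suc i < length xs \<longrightarrow>
           g (xs ! Suc i) \<le> Suc (g (xs ! i)) \<and> g (xs ! i) \<le> Suc (g (xs ! Suc i))"
  shows "\<exists>i. Suc i < length xs \<and> {g (xs ! i), g (xs ! Suc i)} = {m, Suc m}"
  using assms
proof (induction xs)
  case Nil
  then show ?case by simp
next
  case (Cons a ys)
  then have "ys \<noteq> []" by auto
  show ?case
  proof (cases "(g a \<le> m) = (g (hd ys) \<le> m)")
    case True
    have "\<forall>i. Suc i < length ys \<longrightarrow>
        g (ys ! Suc i) \<le> Suc (g (ys ! i)) \<and> g (ys ! i) \<le> Suc (g (ys ! Suc i))"
      using Cons.prems(3) by (metis Suc_less_eq length_Cons nth_Cons_Suc)
    with Cons.IH \<open>ys \<noteq> []\<close> True Cons.prems(2)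
    obtain i where "Suc i < length ys" "{g (ys ! i), g (ys ! Suc i)} = {m, Suc m}" by auto
    then show ?thesis by (intro exI[of _ "Suc i"]) simp
  next
    case False
    moreover have "g (hd ys) \<le> Suc (g a) \<and> g a \<le> Suc (g (hd ys))"
      using Cons.prems(3)[rule_format, of 0] \<open>ys \<noteq> []\<close> by (simp add: hd_conv_nth)
    ultimately show ?thesis
      using \<open>ys \<noteq> []\<close> by (intro exI[of _ 0]) (auto simp: hd_conv_nth)
  qed
qed

lemma path_edges_subset_set: "e \<in> path_edges xs \<Longrightarrow> e \<subseteq> set xs"
  unfolding path_edges_def by auto

lemma walk_crosses_sphere:
  assumes "simple_graph V E" and "connected_graph V E" and "x \<in> V" and "walk V E xs"
    and "(gdist V E x (hd xs) \<le> m) \<noteq> (gdist V E x (last xs) \<le> m)"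
  shows "\<exists>u v. {u, v} \<in> path_edges xs \<and> gdist V E x u = m \<and> gdist V E x v = Suc m"
proof -
  have "xs \<noteq> []" and steps: "\<forall>i. Suc i < length xs \<longrightarrow> E (xs ! i) (xs ! Suc i)"
    using assms(4) unfolding walk_def by auto
  have "E (xs ! Suc i) (xs ! i)" if "Suc i < length xs" for i
    using steps that assms(1) unfolding simple_graph_def by blast
  with steps have "\<forall>i. Suc i < length xs \<longrightarrow> gdist V E x (xs ! Suc i) \<le> Suc (gdist V E x (xs ! i))
      \<and> gdist V E x (xs ! i) \<le> Suc (gdist V E x (xs ! Suc i))"
    using gdist_adjacent_le[OF assms(1-3)] by blast
  then obtain i where i: "Suc i < length xs"
      "{gdist V E x (xs ! i), gdist V E x (xs ! Suc i)} = {m, Suc m}"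
    using list_crosses_threshold[OF \<open>xs \<noteq> []\<close> assms(5)] by blast
  then have edge: "{xs ! i, xs ! Suc i} \<in> path_edges xs" unfolding path_edges_def by blast
  from i(2) consider "gdist V E x (xs ! i) = m" "gdist V E x (xs ! Suc i) = Suc m"
    | "gdist V E x (xs ! Suc i) = m" "gdist V E x (xs ! i) = Suc m"
    by (auto simp: doubleton_eq_iff)
  then show ?thesis
  proof cases
    case 1
    with edge show ?thesis by blast
  next
    case 2
    moreover from edge have "{xs ! Suc i, xs ! i} \<in> path_edges xs" by (simp add: insert_commute)
    ultimately show ?thesis by blast
  qed
qed

lemma pairing_Un:
  assumes "pairing A M" and "pairing B N" and "A \<inter> B = {}"
  shows "pairing (A \<union> B) (M \<union> N)"
proof -
  have M: "\<forall>p\<in>M. card p = 2" "\<Union>M = A" "\<forall>p\<in>M. \<forall>q\<in>M. p \<noteq> q \<longrightarrow> p \<inter> q = {}"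
    using assms(1) unfolding pairing_def by auto
  have N: "\<forall>p\<in>N. card p = 2" "\<Union>N = B" "\<forall>p\<in>N. \<forall>q\<in>N. p \<noteq> q \<longrightarrow> p \<inter> q = {}"
    using assms(2) unfolding pairing_def by auto
  have MN: "p \<inter> q = {} \<and> q \<inter> p = {}" if "p \<in> M" "q \<in> N" for p q
    using that M(2) N(2) assms(3) by blast
  show ?thesis unfolding pairing_def
  proof (intro conjI)
    show "\<forall>p\<in>M \<union> N. card p = 2" using M(1) N(1) by blast
    show "\<Union>(M \<union> N) = A \<union> B" using M(2) N(2) by simp
    show "\<forall>p\<in>M \<union> N. \<forall>q\<in>M \<union> N. p \<noteq> q \<longrightarrow> p \<inter> q = {}"
      using M(3) N(3) MN by blast
  qed
qed

lemma pairing_matching: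
  assumes "inj_on f A" and "f ` A \<inter> A = {}"
  shows "pairing (A \<union> f ` A) ((\<lambda>a. {a, f a}) ` A)"
  unfolding pairing_def
proof (intro conjI ballI impI)
  fix p assume "p \<in> (\<lambda>a. {a, f a}) ` A"
  then obtain a where "a \<in> A" and "p = {a, f a}" by blast
  moreover from \<open>a \<in> A\<close> assms(2) have "f a \<noteq> a" by (metis IntI empty_iff imageI)
  ultimately show "card p = 2" by simp
next
  fix p q assume "p \<in> (\<lambda>a. {a, f a}) ` A" "q \<in> (\<lambda>a. {a, f a}) ` A" "p \<noteq> q"
  then obtain a b where ab: "a \<in> A" "b \<in> A" "p = {a, f a}" "q = {b, f b}" "a \<noteq> b" by blast
  then have "f a \<noteq> f b" using assms(1) by (meson inj_on_eq_iff)
  moreover have "a \<noteq> f b" "b \<noteq> f a" using ab(1,2) assms(2) by blast+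
  ultimately show "p \<inter> q = {}" using ab by auto
next
  show "\<Union> ((\<lambda>a. {a, f a}) ` A) = A \<union> f ` A" by auto
qed

lemma even_card_pairing:
  assumes "finite R" and "even (card R)"
  shows "\<exists>M. pairing R M"
  using assms
proof (induction "card R" arbitrary: R rule: less_induct)
  case less
  show ?case
  proof (cases "R = {}")
    case True
    then show ?thesis unfolding pairing_def by auto
  next
    case False
    then obtain a where a: "a \<in> R" by auto
    with less.prems have "R \<noteq> {a}" by auto
    with a obtain b where b: "b \<in> R" "b \<noteq> a" by auto
    have "0 < card R" using less.prems(1) a by (auto simp: card_gt_0_iff)
    then have "card (R - {a, b}) < card R" "even (card (R - {a, b}))"
      using less.prems a b by (auto simp: card_Diff_subset)
    then obtain M where "pairing (R - {a, b}) M"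
      using less.hyps less.prems(1) by blast
    moreover have "pairing {a, b} {{a, b}}" using b unfolding pairing_def by auto
    ultimately have "pairing ((R - {a, b}) \<union> {a, b}) (M \<union> {{a, b}})"
      by (rule pairing_Un) blast
    moreover have "(R - {a, b}) \<union> {a, b} = R" using a b by blast
    ultimately show ?thesis by auto
  qed
qed

lemma pairing_extends_matching:
  assumes "finite V" and "even (card V)" and "A \<subseteq> V" and "inj_on f A" and "f ` A \<subseteq> V - A"
  shows "\<exists>M. pairing V M \<and> (\<lambda>a. {a, f a}) ` A \<subseteq> M"
proof -
  define R where "R = V - (A \<union> f ` A)"
  have "card (A \<union> f ` A) = 2 * card A"
    using assms by (subst card_Un_disjoint) (auto intro: finite_subset simp: card_image)
  moreover have "card (A \<union> f ` A) \<le> card V" using assms by (intro card_mono) auto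
  moreover have "card R = card V - card (A \<union> f ` A)"
    using assms unfolding R_def by (subst card_Diff_subset) (auto intro: finite_subset)
  ultimately have "even (card R)" using assms(2) by simp
  then obtain MR where "pairing R MR" using even_card_pairing assms(1) unfolding R_def by blast
  moreover have "f ` A \<inter> A = {}" using assms(5) by blast
  ultimately have "pairing ((A \<union> f ` A) \<union> R) ((\<lambda>a. {a, f a}) ` A \<union> MR)"
    using pairing_matching[OF assms(4)] by (intro pairing_Un) (auto simp: R_def)
  moreover have "(A \<union> f ` A) \<union> R = V" using assms(3,5) unfolding R_def by blast
  ultimately show ?thesis by auto
qed

lemma card_le_if_disjoint_hitting:
  assumes "finite C" and "\<And>p. p \<in> N \<Longrightarrow> Q p \<inter> C \<noteq> {}"
    and "\<And>p q. p \<in> N \<Longrightarrow> q \<in> N \<Longrightarrow> p \<noteq> q \<Longrightarrow> Q p \<inter> Q q = {}"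
  shows "card N \<le> card C"
proof -
  have "\<forall>p\<in>N. \<exists>c. c \<in> Q p \<inter> C" using assms(2) by blast
  from bchoice[OF this] obtain e where "\<forall>p\<in>N. e p \<in> Q p \<inter> C" ..
  then have e: "\<And>p. p \<in> N \<Longrightarrow> e p \<in> Q p \<inter> C" by blast
  have "inj_on e N"
  proof (rule inj_onI)
    fix p q assume pq: "p \<in> N" "q \<in> N" "e p = e q"
    then have "e p \<in> Q p \<inter> Q q" using e[of p] e[of q] by simp
    then show "p = q" using assms(3)[OF pq(1,2)] by auto
  qed
  then show ?thesis using e assms(1) by (intro card_inj_on_le) auto
qed

lemma ball_card_le_sphere_product:
  assumes sg: "simple_graph V E" and conn: "connected_graph V E" and pp: "path_pairable V E"
    and x: "x \<in> V" and small: "2 * card {z\<in>V. gdist V E x z \<le> Suc m} \<le> card V"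
  shows "card {z\<in>V. gdist V E x z \<le> m}
           \<le> card {z\<in>V. gdist V E x z = m} * card {z\<in>V. gdist V E x z = Suc m}"
proof -
  define g where "g = gdist V E x"
  define B where "B = {z\<in>V. g z \<le> m}"
  define S where "S = {z\<in>V. g z = m}"
  define S' where "S' = {z\<in>V. g z = Suc m}"
  define Cut where "Cut = (\<lambda>(u, v). {u, v}) ` (S \<times> S')"
  have finV: "finite V" using sg unfolding simple_graph_def by simp
  have "card B \<le> card {z\<in>V. g z \<le> Suc m}"
    using finV unfolding B_def by (intro card_mono) auto
  also have "\<dots> \<le> card (V - {z\<in>V. g z \<le> Suc m})"
    using small finV unfolding g_def by (subst card_Diff_subset) auto
  finally have "card B \<le> card (V - {z\<in>V. g z \<le> Suc m})" .
  moreover have "finite B" "finite (V - {z\<in>V. g z \<le> Suc m})" using finV unfolding B_def by auto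
  ultimately obtain f where f: "f ` B \<subseteq> V - {z\<in>V. g z \<le> Suc m}" "inj_on f B"
    using card_le_inj by blast
  then have far: "a \<in> B \<Longrightarrow> f a \<in> V \<and> Suc m < g (f a)" for a by auto
  obtain M where M: "pairing V M" "(\<lambda>a. {a, f a}) ` B \<subseteq> M"
    using pairing_extends_matching[OF finV _ _ f(2)] pp f(1)
    unfolding path_pairable_def B_def by fastforce
  with pp obtain P where P: "\<forall>p\<in>M. gpath V E (P p) \<and> {hd (P p), last (P p)} = p"
    and disjoint: "\<forall>p\<in>M. \<forall>q\<in>M. p \<noteq> q \<longrightarrow> path_edges (P p) \<inter> path_edges (P q) = {}"
    unfolding path_pairable_def by blast
  have "card B \<le> card Cut"
  proof (rule card_le_if_disjoint_hitting[where Q = "\<lambda>a. path_edges (P {a, f a})"])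
    show "finite Cut" using finV unfolding Cut_def S_def S'_def by simp
  next
    fix a assume a: "a \<in> B"
    then have "{a, f a} \<in> M" using M(2) by blast
    with P have walk: "walk V E (P {a, f a})"
      and ends: "{hd (P {a, f a}), last (P {a, f a})} = {a, f a}"
      unfolding gpath_def by auto
    have "g a \<le> m" "\<not> g (f a) \<le> m" using a far[OF a] unfolding B_def by auto
    with ends have "(g (hd (P {a, f a})) \<le> m) \<noteq> (g (last (P {a, f a})) \<le> m)"
      by (auto simp: doubleton_eq_iff)
    then obtain u v where uv: "{u, v} \<in> path_edges (P {a, f a})" "g u = m" "g v = Suc m"
      using walk_crosses_sphere[OF sg conn x walk] unfolding g_def by blast
    moreover have "u \<in> V" "v \<in> V"
      using path_edges_subset_set[OF uv(1)] walk unfolding walk_def by auto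
    ultimately have "{u, v} \<in> Cut"
      unfolding Cut_def S_def S'_def by (intro image_eqI[of _ _ "(u, v)"]) auto
    with uv(1) show "path_edges (P {a, f a}) \<inter> Cut \<noteq> {}" by blast
  next
    fix a b assume "a \<in> B" "b \<in> B" "a \<noteq> b"
    moreover have "b \<noteq> f a" using far \<open>a \<in> B\<close> \<open>b \<in> B\<close> unfolding B_def by force
    ultimately have "{a, f a} \<noteq> {b, f b}" by (auto simp: doubleton_eq_iff)
    moreover have "{a, f a} \<in> M" "{b, f b} \<in> M" using M(2) \<open>a \<in> B\<close> \<open>b \<in> B\<close> by blast+
    ultimately show "path_edges (P {a, f a}) \<inter> path_edges (P {b, f b}) = {}"
      using disjoint by simp
  qed
  also have "card Cut \<le> card (S \<times> S')" unfolding Cut_def by (rule card_image_le) (simp add: finV S_def S'_def)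
  finally show ?thesis unfolding card_cartesian_product B_def S_def S'_def g_def .
qed

lemma sum_lessThan_double:
  "(\<Sum>i<2*k. s i) = (\<Sum>j<k. s (2*j) + s (2*j+1))" for s :: "nat \<Rightarrow> 'a::comm_monoid_add"
  by (induct k) (simp_all add: add.assoc)

lemma double_sum_lessThan_id: "2 * (\<Sum>j<k. j) = k * (k - 1 :: nat)"
proof (induct k)
  case (Suc k)
  then have "2 * (\<Sum>j<Suc k. j) = k * (k - 1) + 2 * k" by simp
  also have "\<dots> = Suc k * (Suc k - 1)" by (cases k) simp_all
  finally show ?case .
qed simp

lemma four_mult_le_square_sum: "4 * (a * b) \<le> (a + b) * (a + b :: nat)"
proof -
  have "int (4 * (a * b)) + (int a - int b) * (int a - int b) = int ((a + b) * (a + b))"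
    by (simp add: algebra_simps)
  moreover have "0 \<le> (int a - int b) * (int a - int b)" by simp
  ultimately show ?thesis by linarith
qed

lemma layer_sizes_lower_bound:
  fixes s :: "nat \<Rightarrow> nat" and N :: nat
  assumes s0: "1 \<le> s 0"
    and ball: "\<And>m. 2 * (\<Sum>j\<le>Suc m. s j) \<le> N \<Longrightarrow> (\<Sum>j\<le>m. s j) \<le> s m * s (Suc m)"
    and half: "2 * (\<Sum>j\<le>2*k+1. s j) \<le> N"
  shows "k \<le> s (2*k) + s (2*k+1)"
  using half
proof (induction k rule: less_induct)
  case (less k)
  define a b T where "a = s (2*k)" and "b = s (2*k+1)" and "T = (\<Sum>i<2*k. s i)"
  have earlier: "j \<le> s (2*j) + s (2*j+1)" if "j < k" for j
  proof (rule less.IH[OF that])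
    have "(\<Sum>i\<le>2*j+1. s i) \<le> (\<Sum>i\<le>2*k+1. s i)"
      using that by (intro sum_mono2) auto
    then show "2 * (\<Sum>i\<le>2*j+1. s i) \<le> N" using less.prems by linarith
  qed
  have "(\<Sum>j<k. j) \<le> T"
    unfolding T_def sum_lessThan_double by (intro sum_mono) (use earlier in auto)
  then have T_large: "k * (k - 1) \<le> 2 * T"
    using double_sum_lessThan_id[of k] by linarith
  have ball_2k: "(\<Sum>i\<le>2*k. s i) = T + a"
    unfolding T_def a_def by (simp add: lessThan_Suc_atMost[symmetric])
  have ab: "T + a \<le> a * b"
    using ball[of "2*k"] less.prems unfolding ball_2k a_def b_def by simp
  have pos: "1 \<le> T + a"
    using s0 member_le_sum[of 0 "{..2*k}" s] unfolding ball_2k by simp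
  show ?case
  proof (rule ccontr)
    \<comment> \<open>Otherwise \<open>4 (T + a) \<le> (a + b)\<^sup>2 \<le> 2 T\<close>, which forces \<open>T + a = 0\<close>.\<close>
    assume "\<not> ?case"
    then have "(a + b) * (a + b + 1) \<le> (k - 1) * k"
      unfolding a_def b_def by (intro mult_le_mono) auto
    moreover have "(a + b) * (a + b) \<le> (a + b) * (a + b + 1)" by simp
    moreover note four_mult_le_square_sum[of a b]
    ultimately show False using T_large ab pos by (simp add: mult.commute)
  qed
qed

lemma sum_card_levels_atMost:
  fixes g :: "'a \<Rightarrow> nat"
  assumes "finite V"
  shows "(\<Sum>j\<le>m. card {z\<in>V. g z = j}) = card {z\<in>V. g z \<le> m}"
proof -
  have "{z\<in>V. g z \<le> m} = (\<Union>j\<le>m. {z\<in>V. g z = j})" by auto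
  also have "card \<dots> = (\<Sum>j\<le>m. card {z\<in>V. g z = j})"
    using assms by (intro card_UN_disjoint) auto
  finally show ?thesis ..
qed

theorem lemma1:
  fixes V :: "'a set" and E :: "'a \<Rightarrow> 'a \<Rightarrow> bool" and d :: nat and x y :: 'a
  assumes "simple_graph V E"
    and "path_pairable V E"
    and "has_diameter V E d" and "d \<ge> 20"
    and "x \<in> V" and "y \<in> V" and "gdist V E x y = d"
  shows "\<forall>k::nat.
           2 * (\<Sum>j\<le>2*k+1. card {z\<in>V. gdist V E x z = j}) \<le> card V \<longrightarrow>
           card {z\<in>V. gdist V E x z = 2*k} + card {z\<in>V. gdist V E x z = 2*k+1} \<ge> k"
proof (intro allI impI)
  fix k :: nat
  let ?s = "\<lambda>j. card {z\<in>V. gdist V E x z = j}"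
  assume half: "2 * (\<Sum>j\<le>2*k+1. ?s j) \<le> card V"
  have finV: "finite V" using assms(1) unfolding simple_graph_def by simp
  have conn: "connected_graph V E" using assms(3) unfolding has_diameter_def by simp
  have balls: "(\<Sum>j\<le>m. ?s j) = card {z\<in>V. gdist V E x z \<le> m}" for m
    using sum_card_levels_atMost[OF finV] .
  show "k \<le> ?s (2*k) + ?s (2*k+1)"
  proof (rule layer_sizes_lower_bound[OF _ _ half])
    have "x \<in> {z\<in>V. gdist V E x z = 0}" using assms(5) gdist_self by fastforce
    with finV show "1 \<le> ?s 0" by (simp add: Suc_le_eq card_gt_0_iff) blast
    show "(\<Sum>j\<le>m. ?s j) \<le> ?s m * ?s (Suc m)" if "2 * (\<Sum>j\<le>Suc m. ?s j) \<le> card V" for m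
      using ball_card_le_sphere_product[OF assms(1) conn assms(2,5)] that unfolding balls .
  qed
qed

end
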